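(* Let $s\ge3$ be an integer, $\psi_s(z):=z^{s-1}(z+s)-(s-1)^{s-1}$, and let $\alpha$ be a nontrivial root of $\psi_s$ of degree $d$ as an algebraic number, with conjugates $\beta_1,\dots,\beta_d$ (including $\alpha$). Put $M:=\prod_{j=1}^d(s+\beta_j)$ and $N:=\prod_{j=1}^d\beta_j$ (both rational integers). Then there is an integer $n$ with $|n|\ge2$, $n\mid(s-1)$, $M=n^{s-1}$ and $nN=(s-1)^d$.
   Context: When $s$ is odd, $z=1-s$ is a double root of $\psi_s$, called trivial; all other roots are nontrivial. When $s$ is even all roots are nontrivial. *)

theory Defs
  imports "HOL-Computational_Algebra.Polynomial" Complex_Main
begin

definition psi :: "nat \<Rightarrow> complex \<Rightarrow> complex" where
  "psi s z = z ^ (s - 1) * (z + of_nat s) - (of_nat s - 1) ^ (s - 1)"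

text \<open>Trivial root: for odd s, z = 1 - s (a double root). For even s no root is trivial.\<close>
definition trivial_root :: "nat \<Rightarrow> complex \<Rightarrow> bool" where
  "trivial_root s z \<longleftrightarrow> odd s \<and> z = 1 - of_nat s"

definition is_min_poly :: "complex \<Rightarrow> rat poly \<Rightarrow> bool" where
  "is_min_poly \<alpha> p \<longleftrightarrow> p \<noteq> 0 \<and> lead_coeff p = 1 \<and> poly (map_poly of_rat p) \<alpha> = 0 \<and>
     (\<forall>q. q \<noteq> 0 \<and> poly (map_poly of_rat q) \<alpha> = 0 \<longrightarrow> degree p \<le> degree q)"

definition min_poly :: "complex \<Rightarrow> rat poly" where
  "min_poly \<alpha> = (THE p. is_min_poly \<alpha> p)"

definition alg_degree :: "complex \<Rightarrow> nat" where
  "alg_degree \<alpha> = degree (min_poly \<alpha>)"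

definition conjugates :: "complex \<Rightarrow> complex set" where
  "conjugates \<alpha> = {\<beta>. poly (map_poly of_rat (min_poly \<alpha>)) \<beta> = 0}"

end

theory Submission
  imports Defs "Berlekamp_Zassenhaus.Factor_Bound"
begin

text \<open>For a root \<open>\<beta>\<close> of \<open>\<psi>\<^sub>s\<close> put \<open>u = (s - 1)/\<beta>\<close>; then \<open>s + \<beta> = u\<^sup>s\<^sup>-\<^sup>1\<close> and \<open>u\<^sup>s = s u + (s - 1)\<close>.
  As \<open>\<beta>\<close> runs over the conjugates of \<open>\<alpha>\<close>, the numbers \<open>u\<close> are the roots of a monic rational factor
  of \<open>x\<^sup>s - s x - (s - 1)\<close> (the reversed minimal polynomial), so by Gauss's lemma \<open>n = \<Prod>u\<close> is an
  integer dividing \<open>s - 1\<close>, and \<open>M = n\<^sup>s\<^sup>-\<^sup>1\<close>, \<open>n N = (s - 1)\<^sup>d\<close> are immediate.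
  To exclude \<open>|n| = 1\<close>: at most one root of \<open>u\<^sup>s = s u + (s - 1)\<close> lies in the closed unit disk, and
  \<open>\<Prod>(1 + u)\<close> is a nonzero integer because \<open>-1\<close> is a conjugate only for the trivial root. The
  identity \<open>u (u\<^sup>s\<^sup>-\<^sup>1 - 1) = (s - 1)(1 + u)\<close> then gives \<open>\<Prod>|u\<^sup>s\<^sup>-\<^sup>1 - 1| \<ge> (s - 1)\<^sup>d\<close> if \<open>|\<Prod>u| = 1\<close>,
  whereas \<open>|v\<^sup>s\<^sup>-\<^sup>1 - 1| \<le> 2|v|\<^sup>s\<^sup>-\<^sup>1\<close> for the large roots and a lower bound on the small real root
  give a smaller upper bound.\<close>

interpretation of_rat_poly_hom: map_poly_idom_hom "of_rat :: rat \<Rightarrow> complex" ..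

lemma is_min_poly_degree_pos:
  assumes "is_min_poly \<alpha> p" shows "0 < degree p"
proof (rule ccontr)
  assume "\<not> 0 < degree p"
  then have "p = [:lead_coeff p:]" by (metis degree_0_id gr0I)
  with assms show False by (simp add: is_min_poly_def)
qed

lemma is_min_poly_unique:
  assumes p: "is_min_poly \<alpha> p" and q: "is_min_poly \<alpha> q" shows "p = q"
proof (rule ccontr)
  assume "p \<noteq> q"
  have deg: "degree p = degree q" using p q unfolding is_min_poly_def by (meson le_antisym)
  have "poly (map_poly of_rat (p - q)) \<alpha> = 0"
    using p q by (simp add: is_min_poly_def hom_distribs)
  with \<open>p \<noteq> q\<close> p have "degree p \<le> degree (p - q)" by (simp add: is_min_poly_def)
  moreover have "degree (p - q) \<le> degree p" using deg by (simp add: degree_diff_le)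
  moreover have "Polynomial.coeff (p - q) (degree p) = 0" using p q deg by (simp add: is_min_poly_def)
  ultimately show False using \<open>p \<noteq> q\<close> by (metis eq_iff_diff_eq_0 le_antisym leading_coeff_0_iff)
qed

lemma is_min_poly_min_poly:
  assumes "q \<noteq> 0" "poly (map_poly of_rat q) \<alpha> = 0" shows "is_min_poly \<alpha> (min_poly \<alpha>)"
proof -
  define P where "P = (\<lambda>n. \<exists>q. q \<noteq> 0 \<and> poly (map_poly of_rat q) \<alpha> = 0 \<and> degree q = n)"
  have "P (degree q)" using assms P_def by blast
  hence "P (LEAST n. P n)" by (rule LeastI)
  then obtain q0 where q0: "q0 \<noteq> 0" "poly (map_poly of_rat q0) \<alpha> = 0" "degree q0 = (LEAST n. P n)"
    unfolding P_def by blast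
  define p0 where "p0 = Polynomial.smult (inverse (lead_coeff q0)) q0"
  have "is_min_poly \<alpha> p0" unfolding is_min_poly_def
  proof (intro conjI allI impI)
    show "p0 \<noteq> 0" "poly (map_poly of_rat p0) \<alpha> = 0"
      using q0(1,2) by (simp_all add: p0_def hom_distribs)
    show "lead_coeff p0 = 1" using q0(1) by (simp add: p0_def lead_coeff_smult)
    fix q assume "q \<noteq> 0 \<and> poly (map_poly of_rat q) \<alpha> = 0"
    hence "(LEAST n. P n) \<le> degree q" unfolding P_def by (blast intro: Least_le)
    thus "degree p0 \<le> degree q" using q0 by (simp add: p0_def)
  qed
  moreover from this have "min_poly \<alpha> = p0"
    unfolding min_poly_def using is_min_poly_unique by blast
  ultimately show ?thesis by simp
qed

lemma is_min_poly_dvd: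
  assumes p: "is_min_poly \<alpha> p" and q: "poly (map_poly of_rat q) \<alpha> = 0" shows "p dvd q"
proof -
  have "poly (map_poly of_rat (q mod p)) \<alpha> = 0"
    using p q by (simp add: is_min_poly_def hom_distribs flip: minus_div_mult_eq_mod)
  moreover have "q mod p = 0 \<or> degree (q mod p) < degree p"
    using p degree_mod_less by (auto simp: is_min_poly_def)
  ultimately have "q mod p = 0" using p unfolding is_min_poly_def by (meson not_le)
  thus ?thesis by (simp add: mod_0_imp_dvd)
qed

text \<open>Were the minimal polynomial of \<open>\<beta>\<close> a proper factor of \<open>p\<close>, then \<open>\<alpha>\<close> would be a root of the
  cofactor.\<close>
lemma is_min_poly_conjugate:
  assumes p: "is_min_poly \<alpha> p" and \<beta>: "poly (map_poly of_rat p) \<beta> = 0"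
  shows "is_min_poly \<beta> p"
proof -
  have "p \<noteq> 0" using p by (simp add: is_min_poly_def)
  have p\<beta>: "is_min_poly \<beta> (min_poly \<beta>)" using \<open>p \<noteq> 0\<close> \<beta> by (rule is_min_poly_min_poly)
  then obtain c where pc: "p = min_poly \<beta> * c" using is_min_poly_dvd \<beta> by blast
  have "poly (map_poly of_rat (min_poly \<beta>)) \<alpha> = 0"
  proof (rule ccontr)
    assume "\<not> ?thesis"
    then have "poly (map_poly of_rat c) \<alpha> = 0" using p pc by (simp add: is_min_poly_def hom_distribs)
    moreover have "c \<noteq> 0" using pc \<open>p \<noteq> 0\<close> by auto
    ultimately have "degree p \<le> degree c" using p by (simp add: is_min_poly_def)
    moreover have "degree p = degree (min_poly \<beta>) + degree c"
      using pc \<open>p \<noteq> 0\<close> by (simp add: degree_mult_eq)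
    ultimately show False using is_min_poly_degree_pos[OF p\<beta>] by simp
  qed
  then have "degree p \<le> degree (min_poly \<beta>)" using p p\<beta> by (simp add: is_min_poly_def)
  with p p\<beta> \<beta> show ?thesis unfolding is_min_poly_def by (meson order.trans)
qed

lemma is_min_poly_rational_root:
  assumes p: "is_min_poly \<alpha> p" and r: "poly (map_poly of_rat p) (of_rat r :: complex) = 0"
  shows "\<alpha> = of_rat r"
proof -
  have "p dvd [:-r, 1:]"
    using is_min_poly_conjugate[OF p r] by (rule is_min_poly_dvd) (simp add: of_rat_minus)
  then obtain k where "[:-r, 1:] = p * k" by (elim dvdE)
  then have "poly (map_poly of_rat [:-r, 1:]) \<alpha> = 0"
    using p by (simp add: is_min_poly_def hom_distribs del: pCons_eq_iff)
  then show ?thesis by (simp add: of_rat_minus)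
qed

lemma is_min_poly_rsquarefree:
  assumes p: "is_min_poly \<alpha> p" shows "rsquarefree (map_poly (of_rat :: rat \<Rightarrow> complex) p)"
  unfolding rsquarefree_roots
proof (intro allI notI)
  fix \<beta> :: complex
  assume "poly (map_poly of_rat p) \<beta> = 0 \<and> poly (pderiv (map_poly of_rat p)) \<beta> = 0"
  then have "is_min_poly \<beta> p" and "poly (map_poly of_rat (pderiv p)) \<beta> = 0"
    using is_min_poly_conjugate[OF p] by (auto simp: hom_distribs)
  moreover have "pderiv p \<noteq> 0" "degree (pderiv p) < degree p"
    using is_min_poly_degree_pos[OF p] by (auto simp: pderiv_eq_0_iff degree_pderiv)
  ultimately show False unfolding is_min_poly_def by (meson not_le)
qed

lemma min_poly_eq_prod_conjugates:
  assumes "is_min_poly \<alpha> (min_poly \<alpha>)"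
  shows "map_poly of_rat (min_poly \<alpha>) = (\<Prod>\<beta>\<in>conjugates \<alpha>. [:-\<beta>, 1:])"
  using complex_poly_decompose_rsquarefree[OF is_min_poly_rsquarefree[OF assms]] assms
  by (simp add: is_min_poly_def conjugates_def)

lemma finite_conjugates:
  assumes "is_min_poly \<alpha> (min_poly \<alpha>)" shows "finite (conjugates \<alpha>)"
  unfolding conjugates_def by (rule poly_roots_finite) (use assms in \<open>simp add: is_min_poly_def\<close>)

lemma card_conjugates:
  assumes "is_min_poly \<alpha> (min_poly \<alpha>)" shows "card (conjugates \<alpha>) = alg_degree \<alpha>"
proof -
  have "alg_degree \<alpha> = degree (map_poly (of_rat :: rat \<Rightarrow> complex) (min_poly \<alpha>))"
    by (simp add: alg_degree_def)
  also have "\<dots> = card (conjugates \<alpha>)"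
    unfolding min_poly_eq_prod_conjugates[OF assms] by (simp add: degree_prod_sum_eq)
  finally show ?thesis by simp
qed

lemma reflect_poly_pcompose_prod_linear:
  fixes C :: "'a::field set"
  assumes "0 \<notin> C" "c \<noteq> 0"
  shows "reflect_poly ((\<Prod>\<beta>\<in>C. [:-\<beta>, 1:]) \<circ>\<^sub>p [:0, c:])
           = Polynomial.smult (\<Prod>\<beta>\<in>C. -\<beta>) (\<Prod>\<beta>\<in>C. [:-(c / \<beta>), 1:])"
proof -
  have "reflect_poly ((\<Prod>\<beta>\<in>C. [:-\<beta>, 1:]) \<circ>\<^sub>p [:0, c:])
        = (\<Prod>\<beta>\<in>C. reflect_poly ([:-\<beta>, 1:] \<circ>\<^sub>p [:0, c:]))"
    by (simp only: pcompose_prod reflect_poly_prod)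
  also have "\<dots> = (\<Prod>\<beta>\<in>C. Polynomial.smult (-\<beta>) [:-(c / \<beta>), 1:])"
    using assms by (intro prod.cong) (auto simp: pcompose_pCons reflect_poly_def)
  finally show ?thesis by (simp only: prod_smult)
qed

lemma map_poly_of_rat_reflect_poly:
  "map_poly (of_rat :: rat \<Rightarrow> 'a::field_char_0) (reflect_poly p) = reflect_poly (map_poly of_rat p)"
  by (rule poly_eqI) (simp add: coeff_reflect_poly coeff_map_poly)

lemma poly_eqI_nonzero:
  fixes f g :: "'a::{idom, ring_char_0} poly"
  assumes "\<And>x. x \<noteq> 0 \<Longrightarrow> poly f x = poly g x"
  shows "f = g"
proof (rule ccontr)
  assume "f \<noteq> g"
  then have "finite {x. poly (f - g) x = 0}" by (intro poly_roots_finite) simp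
  moreover have "UNIV - {0} \<subseteq> {x. poly (f - g) x = 0}" using assms by auto
  moreover have "infinite (UNIV - {0 :: 'a})" using infinite_UNIV_char_0 by simp
  ultimately show False by (meson finite_subset)
qed

lemma monic_factor_of_monic_int_poly:
  fixes g :: "rat poly" and Q :: "int poly"
  assumes "g dvd map_poly of_int Q" "lead_coeff Q = 1" "lead_coeff g = 1"
  shows "\<exists>G. map_poly of_int G = g \<and> G dvd Q"
proof -
  obtain k where Qgk: "map_poly of_int Q = g * k" using assms(1) by (elim dvdE)
  obtain r G where rn: "rat_to_normalized_int_poly g = (r, G)" by force
  from rat_to_normalized_int_poly[OF rn]
  have g: "g = Polynomial.smult r (map_poly of_int G)" and "r > 0" by auto
  from rat_to_int_factor_explicit[OF Qgk rn]
  obtain K where QGK: "Q = G * Polynomial.smult (content Q) K" by blast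
  then have "lead_coeff G dvd 1" using assms(2) by (metis dvd_triv_left lead_coeff_mult)
  then have "lead_coeff G = 1 \<or> lead_coeff G = -1" by auto
  moreover have "1 = r * of_int (lead_coeff G)" using assms(3) g \<open>r > 0\<close> by simp
  ultimately have "r = 1" using \<open>r > 0\<close> by auto
  then have "map_poly of_int G = g" using g by simp
  moreover have "G dvd Q" by (subst QGK) (rule dvd_triv_left)
  ultimately show ?thesis by blast
qed

lemma complex_eq_1_if_Re_eq_1:
  fixes z :: complex assumes "Re z = 1" "norm z \<le> 1" shows "z = 1"
proof -
  have "Re z ^ 2 + Im z ^ 2 \<le> 1" using assms(2) by (simp add: cmod_def power_le_one_iff)
  then have "Im z = 0" using assms(1) by simp
  then show ?thesis using assms(1) by (simp add: complex_eq_iff)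
qed

text \<open>Two roots \<open>a \<noteq> b\<close> of \<open>z\<^sup>s = s z + c\<close> would give \<open>(\<Sum>i<s. b^(s-1-i) * a^i) = s\<close>, a sum of \<open>s\<close>
  numbers in the closed unit disk, so all of them would equal \<open>1\<close>.\<close>
lemma unit_disk_root_unique:
  fixes a b c :: complex
  assumes s: "s \<ge> 2" and a: "a ^ s = of_nat s * a + c" and b: "b ^ s = of_nat s * b + c"
    and na: "norm a \<le> 1" and nb: "norm b \<le> 1"
  shows "a = b"
proof (rule ccontr)
  assume "a \<noteq> b"
  define w where "w i = b ^ (s - Suc i) * a ^ i" for i
  have "(a - b) * (\<Sum>i\<in>{..<s}. w i) = a ^ s - b ^ s" unfolding w_def by (rule power_diff_sumr2[symmetric])
  also have "\<dots> = (a - b) * of_nat s" using a b by (simp add: algebra_simps)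
  finally have "(\<Sum>i\<in>{..<s}. w i) = of_nat s" using \<open>a \<noteq> b\<close> by simp
  then have "(\<Sum>i\<in>{..<s}. 1 - Re (w i)) = 0" by (simp add: sum_subtractf flip: Re_sum)
  moreover have nw: "norm (w i) \<le> 1" for i
    unfolding w_def norm_mult norm_power using na nb by (simp add: mult_le_one power_le_one)
  then have "0 \<le> 1 - Re (w i)" for i using complex_Re_le_cmod[of "w i"] by (smt (verit))
  ultimately have "\<forall>i\<in>{..<s}. 1 - Re (w i) = 0" by (simp add: sum_nonneg_eq_0_iff)
  then have w1: "w i = 1" if "i < s" for i using that nw complex_eq_1_if_Re_eq_1 by simp
  have ba: "b ^ (s - 2) * a = 1" using w1[of 1] s by (simp add: w_def numeral_2_eq_2)
  moreover have "b ^ (s - 2) * b = 1"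
    using w1[of 0] s by (simp add: w_def power_Suc2[symmetric] Suc_diff_Suc numeral_2_eq_2)
  ultimately have "b ^ (s - 2) * a = b ^ (s - 2) * b" "b ^ (s - 2) \<noteq> 0" by auto
  then show False using \<open>a \<noteq> b\<close> by simp
qed

lemma unit_disk_root_even:
  fixes u :: complex
  assumes s: "s \<ge> 3" "even s" and u: "u ^ s = of_nat s * u + of_nat (s - 1)" and nu: "norm u \<le> 1"
  shows "\<exists>a. u = - of_real a \<and> 0 < a \<and> a \<le> 1 \<and> a ^ s = real (s - 1) - real s * a"
proof -
  have "cnj u ^ s = of_nat s * cnj u + of_nat (s - 1)" using arg_cong[OF u, of cnj] by simp
  then have "cnj u = u" using s(1) nu by (intro unit_disk_root_unique[OF _ _ u]) simp_all
  then obtain x where x: "u = of_real x" by (metis Reals_cnj_iff Reals_cases)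
  have "of_real (x ^ s) = (of_real (real s * x + real (s - 1)) :: complex)" using u x by simp
  then have ex: "x ^ s = real s * x + real (s - 1)" by (rule of_real_eq_iff[THEN iffD1])
  have "\<bar>x\<bar> \<le> 1" using nu x by simp
  then have "\<bar>x\<bar> ^ s \<le> 1" by (simp add: power_le_one)
  then have "x ^ s \<le> 1" using s(2) by (simp add: power_even_abs)
  have "x < 0"
  proof (rule ccontr)
    assume "\<not> x < 0"
    then have "0 \<le> real s * x" by simp
    moreover have "real (s - 1) \<ge> 2" using s(1) by simp
    ultimately show False using ex \<open>x ^ s \<le> 1\<close> by linarith
  qed
  moreover have "(- x) ^ s = real (s - 1) - real s * (- x)" using ex s(2) by simp
  ultimately show ?thesis using x \<open>\<bar>x\<bar> \<le> 1\<close> by (intro exI[of _ "-x"]) simp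
qed

lemma prod_norm_pow_sub_1_ge:
  fixes U :: "complex set"
  assumes "finite U" and root: "\<And>u. u \<in> U \<Longrightarrow> u ^ Suc t = of_nat (Suc t) * u + of_nat t"
    and "norm (\<Prod>u\<in>U. u) = 1" and "1 \<le> norm (\<Prod>u\<in>U. 1 + u)"
  shows "real t ^ card U \<le> (\<Prod>u\<in>U. norm (u ^ t - 1))"
proof -
  have factor: "u * (u ^ t - 1) = of_nat t * (1 + u)" if "u \<in> U" for u
    using root[OF that] by (simp add: algebra_simps)
  have "(\<Prod>u\<in>U. u) * (\<Prod>u\<in>U. u ^ t - 1) = (\<Prod>u\<in>U. of_nat t * (1 + u))"
    unfolding prod.distrib[symmetric] by (rule prod.cong[OF refl factor])
  also have "\<dots> = of_nat t ^ card U * (\<Prod>u\<in>U. 1 + u)" by (simp add: prod.distrib)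
  finally have "norm (\<Prod>u\<in>U. u) * norm (\<Prod>u\<in>U. u ^ t - 1)
      = norm (of_nat t ^ card U * (\<Prod>u\<in>U. 1 + u))"
    by (simp only: norm_mult[symmetric])
  then have "(\<Prod>u\<in>U. norm (u ^ t - 1)) = real t ^ card U * norm (\<Prod>u\<in>U. 1 + u)"
    using assms(3) by (simp add: prod_norm norm_mult norm_power)
  moreover have "real t ^ card U * 1 \<le> real t ^ card U * norm (\<Prod>u\<in>U. 1 + u)"
    using assms(4) by (intro mult_left_mono) auto
  ultimately show ?thesis by simp
qed

lemma prod_norm_pow_sub_1_le:
  fixes U :: "complex set"
  assumes "finite U" "u\<^sub>0 \<in> U" "u\<^sub>0 \<noteq> 0" and big: "\<And>v. v \<in> U - {u\<^sub>0} \<Longrightarrow> 1 < norm v"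
    and "norm (\<Prod>u\<in>U. u) = 1"
  shows "(\<Prod>u\<in>U. norm (u ^ k - 1)) * norm u\<^sub>0 ^ k \<le> (norm u\<^sub>0 ^ k + 1) * 2 ^ (card U - 1)"
proof -
  let ?V = "U - {u\<^sub>0}" and ?a = "norm u\<^sub>0"
  have split: "(\<Prod>u\<in>U. f u) = f u\<^sub>0 * (\<Prod>v\<in>?V. f v)" for f :: "complex \<Rightarrow> real"
    using assms(1,2) by (rule prod.remove)
  have "norm (u\<^sub>0 ^ k - 1) \<le> ?a ^ k + 1"
    using norm_triangle_ineq4[of "u\<^sub>0 ^ k" 1] by (simp add: norm_power)
  moreover have "(\<Prod>v\<in>?V. norm (v ^ k - 1)) \<le> (\<Prod>v\<in>?V. 2 * norm v ^ k)"
  proof (rule prod_mono)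
    fix v assume "v \<in> ?V"
    then have "norm (v ^ k - 1) \<le> norm v ^ k + 1" "1 \<le> norm v ^ k"
      using norm_triangle_ineq4[of "v ^ k" 1] big[of v] by (auto simp: norm_power intro: one_le_power)
    then show "0 \<le> norm (v ^ k - 1) \<and> norm (v ^ k - 1) \<le> 2 * norm v ^ k" by simp
  qed
  ultimately have "(\<Prod>u\<in>U. norm (u ^ k - 1)) \<le> (?a ^ k + 1) * (2 ^ card ?V * (\<Prod>v\<in>?V. norm v) ^ k)"
    by (simp add: split[of "\<lambda>u. norm (u ^ k - 1)"] mult_mono prod_nonneg prod.distrib
        prod_power_distrib)
  then have "(\<Prod>u\<in>U. norm (u ^ k - 1)) * ?a ^ k
      \<le> (?a ^ k + 1) * (2 ^ card ?V * (\<Prod>v\<in>?V. norm v) ^ k) * ?a ^ k"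
    by (rule mult_right_mono) simp
  also have "\<dots> = (?a ^ k + 1) * 2 ^ card ?V * (?a * (\<Prod>v\<in>?V. norm v)) ^ k"
    by (simp add: power_mult_distrib mult_ac)
  also have "?a * (\<Prod>v\<in>?V. norm v) = 1"
    using assms(5) split[of norm] by (simp add: prod_norm)
  finally show ?thesis using assms(1,2) by simp
qed

lemma pow_ge_inverse_27:
  fixes a :: real
  assumes t: "t \<ge> 3" and a: "(real t - 1) / (real t + 1) \<le> a"
  shows "1 / 27 \<le> a ^ t"
proof -
  define y where "y = 2 / (real t - 1)"
  have "0 < real t - 1" using t by simp
  then have "0 < a" using a by (smt (verit) divide_pos_pos)
  have "1 / a \<le> (real t + 1) / (real t - 1)"
    using a \<open>0 < a\<close> \<open>0 < real t - 1\<close> by (simp add: field_simps)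
  also have "\<dots> = 1 + y" unfolding y_def using \<open>0 < real t - 1\<close> by (simp add: field_simps)
  also have "\<dots> \<le> exp y" by (rule exp_ge_add_one_self)
  finally have "(1 / a) ^ t \<le> exp y ^ t" using \<open>0 < a\<close> by (intro power_mono) auto
  also have "\<dots> = exp (real t * y)" by (simp add: exp_of_nat_mult)
  also have "\<dots> \<le> exp 3"
    using t \<open>0 < real t - 1\<close> by (simp add: y_def field_simps)
  also have "\<dots> = exp 1 ^ 3" by (simp add: exp_of_nat_mult[symmetric])
  also have "\<dots> \<le> 3 ^ 3" using exp_le by (intro power_mono) auto
  finally show ?thesis using \<open>0 < a\<close> by (simp add: power_one_over field_simps)
qed

text \<open>From \<open>a\<^sup>t\<^sup>+\<^sup>1 \<le> 1\<close> one gets \<open>a \<ge> (t - 1)/(t + 1)\<close>, which suffices for \<open>t \<ge> 9\<close>; the cases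
  \<open>t \<le> 7\<close> need sharper explicit bounds.\<close>
lemma small_root_pow_bound:
  fixes a :: real
  assumes t: "t \<ge> 3" "odd t" and a: "0 < a" "a \<le> 1" and root: "a ^ (t + 1) = real t - real (t + 1) * a"
  shows "2 * (a ^ t + 1) < real t ^ 2 * a ^ t"
proof -
  have "a ^ (t + 1) \<le> 1" using a by (intro power_le_one) auto
  then have alow: "(real t - 1) / (real t + 1) \<le> a" using root by (simp add: field_simps)
  have "t = 3 \<or> t = 5 \<or> t = 7 \<or> t \<ge> 9" using t by presburger
  then have "2 < (real t ^ 2 - 2) * a ^ t"
  proof (elim disjE)
    assume t3: "t = 3"
    then have e4: "a ^ 4 = 3 - 4 * a" using root by simp
    moreover have "0 < a ^ 4" using a by simp
    ultimately have "a < 3 / 4" by linarith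
    then have "a ^ 4 \<le> (3 / 4) ^ 4" using a by (intro power_mono) auto
    then have "687 / 1024 \<le> a" using e4 by (simp add: power_divide)
    then have "(687 / 1024) ^ 3 \<le> a ^ 3" by (intro power_mono) auto
    then show ?thesis using t3 by (simp add: power_divide)
  next
    assume t5: "t = 5"
    then have "(2 / 3) ^ 5 \<le> a ^ 5" using alow by (intro power_mono) auto
    then show ?thesis using t5 by (simp add: power_divide)
  next
    assume t7: "t = 7"
    then have "(3 / 4) ^ 7 \<le> a ^ 7" using alow by (intro power_mono) auto
    then show ?thesis using t7 by (simp add: power_divide)
  next
    assume "t \<ge> 9"
    then have "81 \<le> real t ^ 2" using power_mono[of 9 "real t" 2] by simp
    moreover have "1 / 27 \<le> a ^ t" using t(1) alow by (rule pow_ge_inverse_27)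
    ultimately have "79 * (1 / 27) \<le> (real t ^ 2 - 2) * a ^ t" by (intro mult_mono) auto
    then show ?thesis by simp
  qed
  then show ?thesis by (simp add: algebra_simps)
qed

lemma pow_mult_le_two_pow_cancel:
  fixes b c :: real
  assumes "2 \<le> t" "2 \<le> d" "0 \<le> b" and le: "real t ^ d * b \<le> c * 2 ^ (d - 1)"
  shows "real t ^ 2 * b \<le> 2 * c"
proof -
  have d: "d = (d - 2) + 2" "d - 1 = Suc (d - 2)" using assms(2) by auto
  have "2 ^ (d - 2) \<le> real t ^ (d - 2)" using assms(1) by (intro power_mono) auto
  then have "2 ^ (d - 2) * (real t ^ 2 * b) \<le> real t ^ (d - 2) * (real t ^ 2 * b)"
    using assms(3) by (intro mult_right_mono) auto
  also have "\<dots> = real t ^ d * b" by (simp only: mult.assoc[symmetric] power_add[symmetric] d(1)[symmetric])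
  also have "\<dots> \<le> c * 2 ^ (d - 1)" by (rule le)
  also have "\<dots> = 2 ^ (d - 2) * (2 * c)" by (simp only: d(2) power_Suc mult_ac)
  finally show ?thesis by simp
qed

text \<open>\<open>-1\<close> is a root exactly for odd \<open>s\<close>, so the root in the closed unit disk forces \<open>s\<close> to be even.\<close>
lemma unit_disk_root_of_norm_prod_eq_1:
  fixes U :: "complex set"
  assumes s: "s \<ge> 3" and U: "finite U" "U \<noteq> {}"
    and root: "\<And>u. u \<in> U \<Longrightarrow> u ^ s = of_nat s * u + of_nat (s - 1)"
    and "-1 \<notin> U" and prod1: "norm (\<Prod>u\<in>U. u) = 1"
  obtains u\<^sub>0 where "u\<^sub>0 \<in> U" "norm u\<^sub>0 \<le> 1" "\<And>v. v \<in> U - {u\<^sub>0} \<Longrightarrow> 1 < norm v" "even s"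
proof -
  have "\<exists>u\<^sub>0\<in>U. norm u\<^sub>0 \<le> 1"
  proof (rule ccontr)
    assume "\<not> ?thesis"
    then have "1 < (\<Prod>u\<in>U. norm u)" using U by (intro less_1_prod) auto
    then show False using prod1 by (simp add: prod_norm)
  qed
  then obtain u\<^sub>0 where u\<^sub>0: "u\<^sub>0 \<in> U" "norm u\<^sub>0 \<le> 1" by blast
  have big: "1 < norm v" if "v \<in> U - {u\<^sub>0}" for v
  proof (rule ccontr)
    assume "\<not> 1 < norm v"
    then have "v = u\<^sub>0" using s that u\<^sub>0 by (intro unit_disk_root_unique[OF _ root root]) auto
    then show False using that by simp
  qed
  have "even s"
  proof (rule ccontr)
    assume "odd s"
    moreover have "of_nat (s - 1) = (of_nat s - 1 :: complex)" using s by (simp add: of_nat_diff)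
    ultimately have m1: "(-1) ^ s = of_nat s * (-1) + (of_nat (s - 1) :: complex)" by simp
    have "-1 = u\<^sub>0" using s u\<^sub>0(2) by (intro unit_disk_root_unique[OF _ m1 root[OF u\<^sub>0(1)]]) auto
    then show False using \<open>-1 \<notin> U\<close> u\<^sub>0 by simp
  qed
  with u\<^sub>0 big show ?thesis by (rule that)
qed

lemma norm_prod_roots_ne_1:
  fixes U :: "complex set"
  assumes s: "s \<ge> 3" and U: "finite U" "U \<noteq> {}"
    and root: "\<And>u. u \<in> U \<Longrightarrow> u ^ s = of_nat s * u + of_nat (s - 1)"
    and "-1 \<notin> U" and "1 \<le> norm (\<Prod>u\<in>U. 1 + u)"
  shows "norm (\<Prod>u\<in>U. u) \<noteq> 1"
proof
  assume prod1: "norm (\<Prod>u\<in>U. u) = 1"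
  define t where "t = s - 1"
  have st: "s = Suc t" and t: "t \<ge> 2" using s by (auto simp: t_def)
  obtain u\<^sub>0 where u\<^sub>0: "u\<^sub>0 \<in> U" "norm u\<^sub>0 \<le> 1" and big: "\<And>v. v \<in> U - {u\<^sub>0} \<Longrightarrow> 1 < norm v"
    and "even s"
    using unit_disk_root_of_norm_prod_eq_1[OF assms(1-5) prod1] by blast
  then obtain a where a: "u\<^sub>0 = - of_real a" "0 < a" "a \<le> 1" "a ^ s = real (s - 1) - real s * a"
    using unit_disk_root_even[OF s _ root[OF u\<^sub>0(1)] u\<^sub>0(2)] by blast
  have "2 \<le> card U"
  proof (rule ccontr)
    assume "\<not> 2 \<le> card U"
    then have "card U \<le> Suc 0" by simp
    then have "U = {u\<^sub>0}" using U u\<^sub>0(1) by (auto simp: card_le_Suc0_iff_eq)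
    then show False using prod1 a s by simp
  qed
  have "u ^ Suc t = of_nat (Suc t) * u + of_nat t" if "u \<in> U" for u using root[OF that] st by simp
  then have "real t ^ card U \<le> (\<Prod>u\<in>U. norm (u ^ t - 1))"
    by (rule prod_norm_pow_sub_1_ge[OF U(1) _ prod1 \<open>1 \<le> norm (\<Prod>u\<in>U. 1 + u)\<close>])
  then have "real t ^ card U * a ^ t \<le> (\<Prod>u\<in>U. norm (u ^ t - 1)) * a ^ t"
    using a(2) by (intro mult_right_mono) auto
  also have "\<dots> \<le> (a ^ t + 1) * 2 ^ (card U - 1)"
    using prod_norm_pow_sub_1_le[OF U(1) u\<^sub>0(1) _ big prod1] a by simp
  finally have "real t ^ 2 * a ^ t \<le> 2 * (a ^ t + 1)"
    using t \<open>2 \<le> card U\<close> a(2) by (intro pow_mult_le_two_pow_cancel) auto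
  moreover have "2 * (a ^ t + 1) < real t ^ 2 * a ^ t"
  proof (rule small_root_pow_bound)
    show "odd t" using \<open>even s\<close> st by simp
    then show "3 \<le> t" using t by presburger
    show "a ^ (t + 1) = real t - real (t + 1) * a" using a(4) st by simp
  qed (use a in auto)
  ultimately show False by simp
qed

definition psi_poly :: "nat \<Rightarrow> rat poly" where
  "psi_poly s = Polynomial.monom 1 s + (Polynomial.monom (of_nat s) (s - 1) - [:(of_nat s - 1) ^ (s - 1):])"

text \<open>Its roots are the numbers \<open>(s - 1)/\<beta>\<close> for the roots \<open>\<beta>\<close> of \<open>\<psi>\<^sub>s\<close>.\<close>
definition psi_recip_poly :: "nat \<Rightarrow> int poly" where
  "psi_recip_poly s = Polynomial.monom 1 s - [:int (s - 1), int s:]"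

lemma poly_psi_poly:
  assumes "s \<ge> 1" shows "poly (map_poly of_rat (psi_poly s)) z = psi s z"
proof -
  obtain t where st: "s = Suc t" using assms by (cases s) auto
  have "poly (map_poly of_rat (psi_poly s)) z = z ^ s + of_nat s * z ^ (s - 1) - (of_nat s - 1) ^ (s - 1)"
    unfolding psi_poly_def by (simp add: hom_distribs poly_monom of_rat_diff of_rat_power)
  then show ?thesis unfolding psi_def st by (simp add: distrib_left mult.commute)
qed

lemma degree_psi_poly:
  assumes "s \<ge> 2" shows "degree (psi_poly s) = s"
proof -
  have "degree (Polynomial.monom (of_nat s :: rat) (s - 1) - [:(of_nat s - 1) ^ (s - 1):]) \<le> s - 1"
    by (rule order.trans[OF degree_diff_le_max]) (simp add: degree_monom_le)
  then show ?thesis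
    using assms unfolding psi_poly_def by (subst degree_add_eq_left) (simp_all add: degree_monom_eq)
qed

lemma lead_coeff_psi_recip_poly:
  assumes "s \<ge> 2" shows "lead_coeff (psi_recip_poly s) = 1"
proof -
  have "degree [:int (s - 1), int s:] < degree (Polynomial.monom (1::int) s)"
    using assms by (simp add: degree_monom_eq)
  then have "degree (psi_recip_poly s) = s"
    unfolding psi_recip_poly_def diff_conv_add_uminus using assms
    by (subst degree_add_eq_left) (simp_all add: degree_monom_eq)
  moreover have "Polynomial.coeff [:int (s - 1), int s:] s = 0"
    using assms by (intro coeff_eq_0) simp
  ultimately show ?thesis using assms unfolding psi_recip_poly_def by simp
qed

lemma poly_psi_recip_poly:
  "poly (map_poly (of_int :: int \<Rightarrow> 'a::comm_ring_1) (psi_recip_poly s)) x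
     = x ^ s - of_nat s * x - of_nat (s - 1)"
  unfolding psi_recip_poly_def by (simp add: hom_distribs poly_monom mult.commute)

lemma reflect_psi_poly:
  assumes s: "s \<ge> 2"
  shows "reflect_poly (psi_poly s \<circ>\<^sub>p [:0, of_nat (s - 1):])
           = Polynomial.smult (- (of_nat (s - 1) ^ (s - 1))) (map_poly of_int (psi_recip_poly s))"
proof (rule poly_eqI_nonzero)
  fix x :: rat assume "x \<noteq> 0"
  define t where "t = s - 1"
  define c :: rat where "c = of_nat t"
  have st: "s = t + 1" using s by (simp add: t_def)
  have psi: "poly (psi_poly s) y = y ^ (t + 1) + (c + 1) * y ^ t - c ^ t" for y
    using s unfolding psi_poly_def c_def t_def by (simp add: poly_monom of_nat_diff)
  have "degree (psi_poly s \<circ>\<^sub>p [:0, c:]) = t + 1"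
    using s by (simp add: c_def t_def degree_pcompose degree_psi_poly)
  then have "poly (reflect_poly (psi_poly s \<circ>\<^sub>p [:0, c:])) x = x ^ (t + 1) * poly (psi_poly s) (c / x)"
    using \<open>x \<noteq> 0\<close> by (simp add: poly_reflect_poly_nz poly_pcompose field_simps)
  also have "\<dots> = x ^ (t + 1) * ((c / x) ^ (t + 1) + (c + 1) * (c / x) ^ t - c ^ t)"
    by (simp only: psi)
  also have "\<dots> = (x * (c / x)) ^ (t + 1) + (c + 1) * x * (x * (c / x)) ^ t - c ^ t * x ^ (t + 1)"
    by (simp only: power_mult_distrib power_add power_one_right algebra_simps)
  also have "\<dots> = - (c ^ t) * (x ^ (t + 1) - (c + 1) * x - c)"
    using \<open>x \<noteq> 0\<close> by (simp add: algebra_simps)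
  also have "\<dots> = poly (Polynomial.smult (- (c ^ t)) (map_poly of_int (psi_recip_poly s))) x"
    by (simp add: poly_psi_recip_poly st c_def)
  finally show "poly (reflect_poly (psi_poly s \<circ>\<^sub>p [:0, of_nat (s - 1):])) x
      = poly (Polynomial.smult (- (of_nat (s - 1) ^ (s - 1))) (map_poly of_int (psi_recip_poly s))) x"
    by (simp only: c_def t_def)
qed

lemma psi_eq_0_iff:
  assumes "s \<ge> 1"
  shows "psi s z = 0 \<longleftrightarrow> z ^ (s - 1) * (z + of_nat s) = of_nat (s - 1) ^ (s - 1)"
  using assms unfolding psi_def by (simp add: of_nat_diff)

lemma psi_root_recip:
  assumes s: "s \<ge> 2" and z: "psi s z = 0"
  shows "z \<noteq> 0" and "(of_nat (s - 1) / z) ^ (s - 1) = of_nat s + z"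
    and "(of_nat (s - 1) / z) ^ s = of_nat s * (of_nat (s - 1) / z) + of_nat (s - 1)"
proof -
  have e: "z ^ (s - 1) * (z + of_nat s) = of_nat (s - 1) ^ (s - 1)"
    using z s psi_eq_0_iff[of s z] by simp
  show "z \<noteq> 0"
  proof
    assume "z = 0"
    then have "z ^ (s - 1) * (z + of_nat s) = 0" using s by simp
    moreover have "(of_nat (s - 1) :: complex) ^ (s - 1) \<noteq> 0" using s by simp
    ultimately show False by (simp only: e)
  qed
  then have "z ^ (s - 1) \<noteq> 0" by simp
  then show u: "(of_nat (s - 1) / z) ^ (s - 1) = of_nat s + z"
    unfolding power_divide e[symmetric] by (simp add: add.commute)
  have "(of_nat (s - 1) / z) ^ s = of_nat (s - 1) / z * (of_nat (s - 1) / z) ^ (s - 1)"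
    using s by (simp flip: power_Suc)
  also have "\<dots> = of_nat s * (of_nat (s - 1) / z) + of_nat (s - 1) / z * z"
    unfolding u by (simp add: algebra_simps)
  also have "of_nat (s - 1) / z * z = of_nat (s - 1)" using \<open>z \<noteq> 0\<close> by simp
  finally show "(of_nat (s - 1) / z) ^ s = of_nat s * (of_nat (s - 1) / z) + of_nat (s - 1)" .
qed

lemma psi_root_one_minus_trivial:
  assumes s: "s \<ge> 2" and root: "psi s (1 - of_nat s) = 0" shows "trivial_root s (1 - of_nat s)"
proof -
  have "(1 - of_nat s :: complex) ^ (s - 1) = (-1) ^ (s - 1) * (of_nat s - 1) ^ (s - 1)"
    by (metis minus_diff_eq power_minus)
  then have "psi s (1 - of_nat s) = ((-1) ^ (s - 1) - 1) * (of_nat s - 1) ^ (s - 1)"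
    by (simp add: psi_def algebra_simps)
  moreover have "(of_nat s - 1 :: complex) ^ (s - 1) \<noteq> 0" using s by simp
  ultimately have "(-1 :: complex) ^ (s - 1) = 1" using root s by auto
  then have "even (s - 1)" by (cases "even (s - 1)") simp_all
  then show ?thesis using s by (simp add: trivial_root_def)
qed

lemma psi_min_poly:
  assumes "s \<ge> 2" "psi s \<alpha> = 0"
  shows "is_min_poly \<alpha> (min_poly \<alpha>)" and "min_poly \<alpha> dvd psi_poly s"
proof -
  have root: "poly (map_poly of_rat (psi_poly s)) \<alpha> = 0" using assms by (simp add: poly_psi_poly)
  moreover have "psi_poly s \<noteq> 0" using degree_psi_poly[OF assms(1)] assms(1) by auto
  ultimately show p: "is_min_poly \<alpha> (min_poly \<alpha>)" by (rule is_min_poly_min_poly[rotated])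
  show "min_poly \<alpha> dvd psi_poly s" using p root by (rule is_min_poly_dvd)
qed

lemma psi_conjugate:
  assumes "s \<ge> 2" "psi s \<alpha> = 0" "\<beta> \<in> conjugates \<alpha>" shows "psi s \<beta> = 0"
proof -
  obtain h where "psi_poly s = min_poly \<alpha> * h" using psi_min_poly[OF assms(1,2)] by (elim dvdE)
  then have "poly (map_poly of_rat (psi_poly s)) \<beta> = 0"
    using assms(3) by (simp add: conjugates_def hom_distribs)
  then show ?thesis using assms(1) by (simp add: poly_psi_poly)
qed

lemma psi_nontrivial_conjugates:
  assumes "s \<ge> 2" "psi s \<alpha> = 0" "\<not> trivial_root s \<alpha>"
  shows "1 - of_nat s \<notin> conjugates \<alpha>"
proof
  assume "1 - of_nat s \<in> conjugates \<alpha>"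
  then have "poly (map_poly of_rat (min_poly \<alpha>)) (of_rat (1 - of_nat s)) = (0 :: complex)"
    by (simp add: conjugates_def of_rat_diff)
  then have "\<alpha> = of_rat (1 - of_nat s)"
    by (rule is_min_poly_rational_root[OF psi_min_poly(1)[OF assms(1,2)]])
  then have "\<alpha> = 1 - of_nat s" by (simp add: of_rat_diff)
  then show False using assms psi_root_one_minus_trivial by simp
qed

lemma min_poly_recip_conjugates:
  fixes c :: rat
  assumes p: "is_min_poly \<alpha> (min_poly \<alpha>)" and "0 \<notin> conjugates \<alpha>" "c \<noteq> 0"
  shows "map_poly of_rat (Polynomial.smult (1 / poly (min_poly \<alpha>) 0)
           (reflect_poly (min_poly \<alpha> \<circ>\<^sub>p [:0, c:]))) = (\<Prod>\<beta>\<in>conjugates \<alpha>. [:-(of_rat c / \<beta>), 1:])"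
proof -
  let ?C = "conjugates \<alpha>"
  have pC: "map_poly of_rat (min_poly \<alpha>) = (\<Prod>\<beta>\<in>?C. [:-\<beta>, 1:])"
    using p by (rule min_poly_eq_prod_conjugates)
  have "of_rat (poly (min_poly \<alpha>) 0) = poly (map_poly of_rat (min_poly \<alpha>)) (0 :: complex)"
    by (metis of_rat_0 of_rat_hom.poly_map_poly)
  also have "\<dots> = (\<Prod>\<beta>\<in>?C. - \<beta>)" unfolding pC poly_prod by simp
  finally have c0: "of_rat (poly (min_poly \<alpha>) 0) = (\<Prod>\<beta>\<in>?C. - \<beta>)" .
  have "(\<Prod>\<beta>\<in>?C. - \<beta>) \<noteq> 0" using assms(2) finite_conjugates[OF p] by simp
  have "map_poly (of_rat :: rat \<Rightarrow> complex)
        (Polynomial.smult (1 / poly (min_poly \<alpha>) 0) (reflect_poly (min_poly \<alpha> \<circ>\<^sub>p [:0, c:])))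
      = Polynomial.smult (1 / of_rat (poly (min_poly \<alpha>) 0))
          (reflect_poly (map_poly of_rat (min_poly \<alpha>) \<circ>\<^sub>p [:0, of_rat c:]))"
    by (simp add: hom_distribs map_poly_of_rat_reflect_poly of_rat_hom.map_poly_pcompose of_rat_divide)
  also have "\<dots> = Polynomial.smult (1 / (\<Prod>\<beta>\<in>?C. - \<beta>))
      (Polynomial.smult (\<Prod>\<beta>\<in>?C. - \<beta>) (\<Prod>\<beta>\<in>?C. [:-(of_rat c / \<beta>), 1:]))"
    using reflect_poly_pcompose_prod_linear[OF assms(2), of "of_rat c"] assms(3) unfolding c0 pC by simp
  also have "\<dots> = (\<Prod>\<beta>\<in>?C. [:-(of_rat c / \<beta>), 1:])"
    using \<open>(\<Prod>\<beta>\<in>?C. - \<beta>) \<noteq> 0\<close> by simp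
  finally show ?thesis .
qed

lemma psi_recip_conjugates_int_poly:
  assumes s: "s \<ge> 2" and \<alpha>: "psi s \<alpha> = 0"
  shows "\<exists>G. map_poly of_int G = (\<Prod>\<beta>\<in>conjugates \<alpha>. [:-(of_nat (s - 1) / \<beta>), 1:])
           \<and> G dvd psi_recip_poly s"
proof -
  define p where "p = min_poly \<alpha>"
  define c :: rat where "c = of_nat (s - 1)"
  define g where "g = Polynomial.smult (1 / poly p 0) (reflect_poly (p \<circ>\<^sub>p [:0, c:]))"
  have p: "is_min_poly \<alpha> p" and "p dvd psi_poly s" using psi_min_poly[OF s \<alpha>] by (simp_all add: p_def)
  then obtain h where ph: "psi_poly s = p * h" by (elim dvdE)
  have "0 \<notin> conjugates \<alpha>" using psi_conjugate[OF s \<alpha>] psi_root_recip(1)[OF s] by blast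
  moreover have "c \<noteq> 0" using s by (simp add: c_def)
  ultimately have g: "map_poly of_rat g = (\<Prod>\<beta>\<in>conjugates \<alpha>. [:-(of_nat (s - 1) / \<beta>), 1:])"
    using min_poly_recip_conjugates[OF p[unfolded p_def]] by (simp add: g_def p_def c_def of_rat_diff)
  then have "lead_coeff (map_poly (of_rat :: rat \<Rightarrow> complex) g) = 1" by (simp add: lead_coeff_prod)
  then have "lead_coeff g = 1" by simp
  have "poly p 0 \<noteq> 0" using \<open>lead_coeff g = 1\<close> by (auto simp: g_def)
  have "reflect_poly (p \<circ>\<^sub>p [:0, c:])
      dvd Polynomial.smult (- (c ^ (s - 1))) (map_poly of_int (psi_recip_poly s))"
    unfolding reflect_psi_poly[OF s, folded c_def, symmetric] ph
    by (simp add: pcompose_mult reflect_poly_mult)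
  then have "g dvd map_poly of_int (psi_recip_poly s)"
    using \<open>c \<noteq> 0\<close> \<open>poly p 0 \<noteq> 0\<close> by (simp add: g_def smult_dvd_iff dvd_smult_cancel)
  then obtain G where "map_poly of_int G = g" "G dvd psi_recip_poly s"
    using monic_factor_of_monic_int_poly lead_coeff_psi_recip_poly[OF s] \<open>lead_coeff g = 1\<close> by blast
  moreover have "map_poly (of_int :: int \<Rightarrow> complex) G = map_poly of_rat (map_poly of_int G)"
    by (simp add: map_poly_map_poly o_def)
  ultimately show ?thesis using g by auto
qed

lemma prod_add_of_int_poly_eval:
  fixes U :: "'a::comm_ring_1 set"
  assumes "map_poly of_int G = (\<Prod>u\<in>U. [:-u, 1:])"
  shows "(\<Prod>u\<in>U. of_int k + u) = (-1) ^ card U * of_int (poly G (- k))"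
proof -
  have "of_int (poly G (- k)) = poly (map_poly of_int G) (of_int (- k) :: 'a)"
    by (rule of_int_hom.poly_map_poly[symmetric])
  also have "\<dots> = (\<Prod>u\<in>U. - (of_int k + u))" unfolding assms poly_prod by (simp add: algebra_simps)
  also have "\<dots> = (-1) ^ card U * (\<Prod>u\<in>U. of_int k + u)" by (rule prod_uminus)
  finally have "(-1) ^ card U * of_int (poly G (- k)) = ((-1) * (-1)) ^ card U * (\<Prod>u\<in>U. of_int k + u)"
    by (simp only: power_mult_distrib mult.assoc)
  then show ?thesis by simp
qed

lemma prod_roots_int_factor_psi_recip_poly:
  fixes U :: "complex set"
  assumes s: "s \<ge> 3" and U: "finite U" "U \<noteq> {}" "0 \<notin> U" "-1 \<notin> U"
    and G: "map_poly of_int G = (\<Prod>u\<in>U. [:-u, 1:])" "G dvd psi_recip_poly s"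
  shows "\<exists>n::int. 2 \<le> \<bar>n\<bar> \<and> n dvd int s - 1 \<and> (\<Prod>u\<in>U. u) = of_int n"
proof -
  obtain K where QGK: "psi_recip_poly s = G * K" using G(2) by (elim dvdE)
  have root: "u ^ s = of_nat s * u + of_nat (s - 1)" if "u \<in> U" for u
  proof -
    have "poly (map_poly of_int G) u = 0" using that U(1) unfolding G(1) by (simp add: poly_prod)
    then have "poly (map_poly of_int (psi_recip_poly s)) u = 0" by (simp add: QGK hom_distribs)
    then show ?thesis by (simp add: poly_psi_recip_poly diff_eq_eq add.commute)
  qed
  define n where "n = (-1) ^ card U * poly G 0"
  have prodU: "(\<Prod>u\<in>U. u) = of_int n"
    using prod_add_of_int_poly_eval[OF G(1), of 0] by (simp add: n_def)
  have "poly G 0 dvd poly (psi_recip_poly s) 0" by (simp add: QGK)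
  moreover have "poly (psi_recip_poly s) 0 = - (int s - 1)"
    using s by (simp add: psi_recip_poly_def poly_monom of_nat_diff)
  ultimately have "poly G 0 dvd int s - 1" by (metis dvd_minus_iff)
  then have "n dvd int s - 1" by (cases "even (card U)") (simp_all add: n_def)
  have "(\<Prod>u\<in>U. 1 + u) \<noteq> 0" using U(1,4) by (auto simp: add_eq_0_iff)
  then have "poly G (-1) \<noteq> 0" using prod_add_of_int_poly_eval[OF G(1), of 1] by auto
  then have "1 \<le> norm (\<Prod>u\<in>U. 1 + u)"
    using prod_add_of_int_poly_eval[OF G(1), of 1] by (simp add: norm_mult norm_power)
  then have "\<bar>n\<bar> \<noteq> 1"
    using norm_prod_roots_ne_1[OF s U(1,2) root U(4)] prodU by (metis norm_of_int of_int_1 of_int_abs)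
  moreover have "n \<noteq> 0" using prodU U(1,3) by auto
  ultimately show ?thesis using prodU \<open>n dvd int s - 1\<close> by auto
qed

lemma psi_recip_conjugates_prod:
  assumes s: "s \<ge> 3" and \<alpha>: "psi s \<alpha> = 0" and nontrivial: "\<not> trivial_root s \<alpha>"
  shows "\<exists>n::int. 2 \<le> \<bar>n\<bar> \<and> n dvd int s - 1 \<and> (\<Prod>\<beta>\<in>conjugates \<alpha>. of_nat (s - 1) / \<beta>) = of_int n"
proof -
  have s2: "s \<ge> 2" using s by simp
  define r where "r \<beta> = of_nat (s - 1) / \<beta>" for \<beta> :: complex
  have inj: "inj_on r (conjugates \<alpha>)" using s2 by (intro inj_onI) (simp add: r_def)
  have p: "is_min_poly \<alpha> (min_poly \<alpha>)" by (rule psi_min_poly(1)[OF s2 \<alpha>])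
  then have "\<alpha> \<in> conjugates \<alpha>" by (simp add: conjugates_def is_min_poly_def)
  have nz: "\<beta> \<noteq> 0" if "\<beta> \<in> conjugates \<alpha>" for \<beta>
    using psi_root_recip(1)[OF s2 psi_conjugate[OF s2 \<alpha> that]] .
  then have "0 \<notin> r ` conjugates \<alpha>" using s2 by (auto simp: r_def)
  have "-1 \<notin> r ` conjugates \<alpha>"
  proof
    assume "-1 \<in> r ` conjugates \<alpha>"
    then obtain \<beta> where "\<beta> \<in> conjugates \<alpha>" "-1 = of_nat (s - 1) / \<beta>" by (auto simp: r_def)
    moreover from this have "\<beta> = 1 - of_nat s" using nz s2 by (simp add: field_simps of_nat_diff)
    ultimately show False using psi_nontrivial_conjugates[OF s2 \<alpha> nontrivial] by simp
  qed
  obtain G where G: "map_poly of_int G = (\<Prod>\<beta>\<in>conjugates \<alpha>. [:- r \<beta>, 1:])"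
    and "G dvd psi_recip_poly s"
    using psi_recip_conjugates_int_poly[OF s2 \<alpha>] by (auto simp: r_def)
  moreover have "map_poly of_int G = (\<Prod>u\<in>r ` conjugates \<alpha>. [:-u, 1:])"
    unfolding G prod.reindex[OF inj] by (simp add: o_def)
  moreover have "finite (r ` conjugates \<alpha>)" "r ` conjugates \<alpha> \<noteq> {}"
    using finite_conjugates[OF p] \<open>\<alpha> \<in> conjugates \<alpha>\<close> by auto
  ultimately obtain n where "2 \<le> \<bar>n\<bar>" "n dvd int s - 1" "(\<Prod>u\<in>r ` conjugates \<alpha>. u) = of_int n"
    using prod_roots_int_factor_psi_recip_poly[OF s _ _ \<open>0 \<notin> _\<close> \<open>-1 \<notin> _\<close>] by blast
  moreover have "(\<Prod>u\<in>r ` conjugates \<alpha>. u) = (\<Prod>\<beta>\<in>conjugates \<alpha>. of_nat (s - 1) / \<beta>)"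
    using prod.reindex[OF inj, of "\<lambda>u. u"] by (simp add: r_def)
  ultimately show ?thesis by auto
qed

theorem mainTheorem19:
  fixes s :: nat and \<alpha> :: complex
  assumes "s \<ge> 3"
    and "psi s \<alpha> = 0"
    and "\<not> trivial_root s \<alpha>"
  shows "\<exists>n :: int. \<bar>n\<bar> \<ge> 2 \<and> n dvd (int s - 1) \<and>
           (\<Prod>\<beta>\<in>conjugates \<alpha>. of_nat s + \<beta>) = of_int (n ^ (s - 1)) \<and>
           of_int n * (\<Prod>\<beta>\<in>conjugates \<alpha>. \<beta>) = of_int ((int s - 1) ^ alg_degree \<alpha>)"
proof -
  have s2: "s \<ge> 2" using assms(1) by simp
  obtain n :: int where n: "2 \<le> \<bar>n\<bar>" "n dvd int s - 1"
    and prod: "(\<Prod>\<beta>\<in>conjugates \<alpha>. of_nat (s - 1) / \<beta>) = of_int n"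
    using psi_recip_conjugates_prod[OF assms] by blast
  have root: "psi s \<beta> = 0" if "\<beta> \<in> conjugates \<alpha>" for \<beta>
    using psi_conjugate[OF s2 assms(2) that] .
  have "(\<Prod>\<beta>\<in>conjugates \<alpha>. of_nat s + \<beta>) = (\<Prod>\<beta>\<in>conjugates \<alpha>. (of_nat (s - 1) / \<beta>) ^ (s - 1))"
    using psi_root_recip(2)[OF s2 root] by (intro prod.cong) auto
  also have "\<dots> = of_int (n ^ (s - 1))" unfolding prod_power_distrib[symmetric] prod by simp
  finally have M: "(\<Prod>\<beta>\<in>conjugates \<alpha>. of_nat s + \<beta>) = of_int (n ^ (s - 1))" .
  have "of_int n * (\<Prod>\<beta>\<in>conjugates \<alpha>. \<beta>) = (\<Prod>\<beta>\<in>conjugates \<alpha>. of_nat (s - 1) / \<beta> * \<beta>)"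
    unfolding prod[symmetric] by (rule prod.distrib[symmetric])
  also have "\<dots> = (\<Prod>\<beta>\<in>conjugates \<alpha>. of_nat (s - 1))"
    using psi_root_recip(1)[OF s2 root] by (intro prod.cong) auto
  also have "\<dots> = of_int ((int s - 1) ^ alg_degree \<alpha>)"
    using card_conjugates[OF psi_min_poly(1)[OF s2 assms(2)]] s2 by (simp add: of_nat_diff)
  finally show ?thesis using n M by blast
qed

end
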